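(* Let $\mathbf{T}\in\{0,1\}^{n\times\ell}$ be a matrix all of whose columns are dirty, with $\delta(\mathbf{T})\le 2$. If $\ell\ge 5$, then there exists a vector $v\in\{0,1\}^\ell$ such that $d(v,\mathbf{T}[i])\le 1$ for all $i\in[n]$.
   Context: A column of a binary matrix is dirty if it contains both $0$ and $1$. $d$ denotes Hamming distance, $\mathbf{T}[i]$ is the $i$-th row of $\mathbf{T}$, and $\delta(\mathbf{T})=\max_{i\ne i'}d(\mathbf{T}[i],\mathbf{T}[i'])$. *)

theory Defs
  imports Main
begin

text \<open>Binary vectors of length l are modelled as functions nat => bool (only
  indices j < l matter); an n x l binary matrix T is modelled as nat => nat => bool,
  where T i is the i-th row (i < n) and T i j its j-th entry (j < l).\<close>

definition hdist :: "nat \<Rightarrow> (nat \<Rightarrow> bool) \<Rightarrow> (nat \<Rightarrow> bool) \<Rightarrow> nat" where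
  "hdist l x y = card {j. j < l \<and> x j \<noteq> y j}"

definition dirty_col :: "nat \<Rightarrow> (nat \<Rightarrow> nat \<Rightarrow> bool) \<Rightarrow> nat \<Rightarrow> bool" where
  "dirty_col n T j \<longleftrightarrow> (\<exists>i<n. T i j) \<and> (\<exists>i<n. \<not> T i j)"

definition delta_le :: "nat \<Rightarrow> nat \<Rightarrow> (nat \<Rightarrow> nat \<Rightarrow> bool) \<Rightarrow> nat \<Rightarrow> bool" where
  "delta_le n l T k \<longleftrightarrow> (\<forall>i<n. \<forall>i'<n. i \<noteq> i' \<longrightarrow> hdist l (T i) (T i') \<le> k)"

end

theory Submission
  imports Defs
begin

text \<open>Fix a row and replace every row by the set of columns in which it differs from the
  fixed row. Hamming distances become cardinalities of symmetric differences, the fixed row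
  becomes the empty set, and dirtiness of all columns says that the sets cover all columns.
  So all sets have at most 2 elements and are pairwise at symmetric-difference distance at
  most 2. If one of them is a pair \<open>P\<close>, every nonempty set meets \<open>P\<close>, so a column
  \<open>x \<notin> P\<close> lies in a set \<open>{x, s}\<close> with \<open>s \<in> P\<close>; the sets for two different such
  columns share their \<open>s\<close>, and then \<open>s\<close> lies in every nonempty set. Flipping the fixed row
  in column \<open>s\<close> gives the center. If there is no pair, the fixed row itself is the center.
  Two columns outside \<open>P\<close> exist as soon as \<open>l \<ge> 4\<close>.\<close>

lemma three_le_card:
  assumes "finite A" "a \<in> A" "b \<in> A" "c \<in> A" "a \<noteq> b" "a \<noteq> c" "b \<noteq> c"
  shows "3 \<le> card A"
proof -
  have "{a, b, c} \<subseteq> A" using assms by simp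
  from card_mono[OF \<open>finite A\<close> this] show ?thesis using assms by simp
qed

lemma common_element_of_sym_diff_close_family:
  fixes F :: "'a set set"
  assumes finite: "\<forall>A\<in>F. finite A" and small: "\<forall>A\<in>F. card A \<le> 2"
    and close: "\<forall>A\<in>F. \<forall>B\<in>F. card (sym_diff A B) \<le> 2"
    and P: "P \<in> F" "card P = 2"
    and U: "finite U" "4 \<le> card U" "U \<subseteq> \<Union>F"
  shows "\<exists>s. \<forall>A\<in>F. A \<noteq> {} \<longrightarrow> s \<in> A"
proof -
  have meets_P: "A \<inter> P \<noteq> {}" if "A \<in> F" "A \<noteq> {}" for A
  proof
    assume "A \<inter> P = {}"
    then have "sym_diff A P = A \<union> P" by blast
    moreover have "card (A \<union> P) = card A + 2"
      using finite that(1) P \<open>A \<inter> P = {}\<close> by (simp add: card_Un_disjoint)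
    moreover have "card (sym_diff A P) \<le> 2" using close that(1) P(1) by blast
    moreover have "0 < card A" using that finite by (simp add: card_gt_0_iff)
    ultimately show False by simp
  qed
  have pair_shape: "\<exists>s\<in>P. A = {x, s}" if A: "A \<in> F" "x \<in> A" "x \<notin> P" for A x
  proof -
    obtain s where s: "s \<in> A" "s \<in> P" using meets_P A by blast
    have "{x, s} = A"
      using A s finite small by (intro card_seteq) (auto simp: card_insert_if)
    then show ?thesis using s by blast
  qed
  have "2 \<le> card (U - P)" using U(2) P(2) diff_card_le_card_Diff[of P U] finite P(1) by simp
  then obtain x y where xy: "x \<in> U - P" "y \<in> U - P" "x \<noteq> y"
    using card_le_Suc0_iff_eq[of "U - P"] U(1) by fastforce
  then obtain Ax Ay where Ax: "Ax \<in> F" "x \<in> Ax" and Ay: "Ay \<in> F" "y \<in> Ay"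
    using U(3) by blast
  obtain s where s: "s \<in> P" "Ax = {x, s}" using pair_shape[OF Ax] xy(1) by blast
  obtain t where t: "t \<in> P" "Ay = {y, t}" using pair_shape[OF Ay] xy(2) by blast
  have "s = t"
  proof (rule ccontr)
    assume "s \<noteq> t"
    then have "3 \<le> card (sym_diff Ax Ay)"
      using Ax(1) Ay(1) s t xy finite by (intro three_le_card[of _ x s y]) auto
    then show False using close Ax Ay by fastforce
  qed
  have "s \<in> A" if A: "A \<in> F" "A \<noteq> {}" for A
  proof (rule ccontr)
    assume "s \<notin> A"
    obtain s' where s': "s' \<in> A" "s' \<in> P" "s' \<noteq> s" using meets_P A \<open>s \<notin> A\<close> by blast
    have outside_partner_mem: "z \<in> A" if "B \<in> F" "B = {z, s}" "z \<notin> P" for B z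
    proof (rule ccontr)
      assume "z \<notin> A"
      then have "3 \<le> card (sym_diff A B)"
        using that s' \<open>s \<notin> A\<close> s(1) finite A(1) by (intro three_le_card[of _ z s s']) auto
      then show False using close that(1) A(1) by fastforce
    qed
    have "3 \<le> card A"
      using outside_partner_mem[OF Ax(1) s(2)] outside_partner_mem[OF Ay(1)] t(2) \<open>s = t\<close>
        xy s' finite A(1)
      by (intro three_le_card[of _ x y s']) auto
    then show False using small A(1) by fastforce
  qed
  then show ?thesis by blast
qed

lemma sym_diff_close_family_has_center:
  fixes F :: "'a set set"
  assumes finite: "\<forall>A\<in>F. finite A"
    and close: "\<forall>A\<in>F. \<forall>B\<in>F. card (sym_diff A B) \<le> 2"
    and empty: "{} \<in> F"
    and U: "finite U" "4 \<le> card U" "U \<subseteq> \<Union>F"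
  shows "\<exists>C\<subseteq>\<Union>F. card C \<le> 1 \<and> (\<forall>A\<in>F. card (sym_diff C A) \<le> 1)"
proof -
  have card_le_2: "card A \<le> 2" if "A \<in> F" for A
    using close empty that by fastforce
  show ?thesis
  proof (cases "\<exists>P\<in>F. card P = 2")
    case True
    then obtain P where P: "P \<in> F" "card P = 2" by blast
    then obtain s where s: "\<forall>A\<in>F. A \<noteq> {} \<longrightarrow> s \<in> A"
      using common_element_of_sym_diff_close_family[OF finite _ close _ _ U] card_le_2 by blast
    have "s \<in> \<Union>F" using P s by fastforce
    moreover have "card (sym_diff {s} A) \<le> 1" if "A \<in> F" for A
    proof (cases "A = {}")
      case False
      then have "s \<in> A" "sym_diff {s} A = A - {s}" using s that by auto
      then show ?thesis using card_le_2[OF that] by simp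
    qed simp
    ultimately show ?thesis by (intro exI[of _ "{s}"]) auto
  next
    case False
    then have "card A \<le> 1" if "A \<in> F" for A
      using card_le_2[OF that] that by fastforce
    then show ?thesis by (intro exI[of _ "{}"]) auto
  qed
qed

lemma hdist_eq_card_sym_diff:
  "hdist l x y = card (sym_diff {j. j < l \<and> x j \<noteq> w j} {j. j < l \<and> y j \<noteq> w j})"
  unfolding hdist_def by (rule arg_cong[where f = card]) auto

theorem lemma11:
  fixes n l :: nat and T :: "nat \<Rightarrow> nat \<Rightarrow> bool"
  assumes "\<forall>j<l. dirty_col n T j"
    and "delta_le n l T 2"
    and "l \<ge> 5"
  shows "\<exists>v :: nat \<Rightarrow> bool. \<forall>i<n. hdist l v (T i) \<le> 1"
proof -
  define D where "D x = {j. j < l \<and> x j \<noteq> T 0 j}" for x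
  define F where "F = (\<lambda>i. D (T i)) ` {..<n}"
  have "0 < n" using assms(1,3) unfolding dirty_col_def by force
  then have "{} \<in> F" unfolding F_def D_def by force
  moreover have "card (sym_diff (D (T i)) (D (T i'))) \<le> 2" if "i < n" "i' < n" for i i'
  proof -
    have "hdist l (T i) (T i') \<le> 2"
      using assms(2) that unfolding delta_le_def by (cases "i = i'") (simp_all add: hdist_def)
    then show ?thesis unfolding D_def hdist_eq_card_sym_diff[of l _ _ "T 0"] .
  qed
  moreover have "{..<l} \<subseteq> \<Union> F"
  proof
    fix j assume "j \<in> {..<l}"
    then obtain i where "i < n" "T i j \<noteq> T 0 j"
      using assms(1) unfolding dirty_col_def by blast
    then show "j \<in> \<Union> F" using \<open>j \<in> {..<l}\<close> unfolding F_def D_def by blast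
  qed
  moreover have "\<forall>A\<in>F. finite A" unfolding F_def D_def by simp
  ultimately obtain C where C: "C \<subseteq> \<Union> F" "\<forall>A\<in>F. card (sym_diff C A) \<le> 1"
    using sym_diff_close_family_has_center[of F "{..<l}"] assms(3) unfolding F_def by auto
  define v where "v j = (T 0 j \<noteq> (j \<in> C))" for j
  have "D v = C" using C(1) unfolding F_def D_def v_def by auto
  then have "hdist l v (T i) \<le> 1" if "i < n" for i
    using C(2) that unfolding hdist_eq_card_sym_diff[of l _ _ "T 0"] D_def F_def by auto
  then show ?thesis by blast
qed

end
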